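(* The following three conjugacies hold. (1) Let $\varphi_1:\operatorname{span}_{\mathbb{R}}\{1,\mathbf{i_1},\mathbf{i_2},\mathbf{j_1}\}\to\operatorname{span}_{\mathbb{R}}\{\mathbf{i_1},\mathbf{i_2},\mathbf{j_2},\mathbf{j_3}\}$, $\varphi_1(x_1+x_2\mathbf{i_1}+x_3\mathbf{i_2}+x_4\mathbf{j_1})=x_2\mathbf{i_1}+x_3\mathbf{i_2}+x_1\mathbf{j_2}-x_4\mathbf{j_3}$. For all real $c_1,c_2,c_3$, with $c=c_1+c_2\mathbf{i_1}+c_3\mathbf{i_2}$ and $c'=\varphi_1(c)=c_2\mathbf{i_1}+c_3\mathbf{i_2}+c_1\mathbf{j_2}$, we have $\varphi_1\circ Q_{3,c}\circ\varphi_1^{-1}=Q_{3,c'}$ on the codomain of $\varphi_1$. (2) Let $\varphi_2:\operatorname{span}_{\mathbb{R}}\{1,\mathbf{i_1},\mathbf{i_2},\mathbf{j_1}\}\to\operatorname{span}_{\mathbb{R}}\{\mathbf{i_1},\mathbf{j_1},\mathbf{j_2},\mathbf{i_4}\}$, $\varphi_2(x_1+x_2\mathbf{i_1}-x_3\mathbf{i_2}+x_4\mathbf{j_1})=x_2\mathbf{i_1}+x_4\mathbf{j_1}+x_1\mathbf{j_2}-x_3\mathbf{i_4}$. For all real $c_1,c_2,c_3$, with $c=c_1+c_2\mathbf{i_1}+c_3\mathbf{j_1}$ and $c'=\varphi_2(c)=c_2\mathbf{i_1}+c_3\mathbf{j_1}+c_1\mathbf{j_2}$, we have $\varphi_2\circ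 Q_{3,c}\circ\varphi_2^{-1}=Q_{3,c'}$ on the codomain of $\varphi_2$. (3) Let $\varphi_3:\operatorname{span}_{\mathbb{R}}\{1,\mathbf{j_1},\mathbf{j_2},\mathbf{j_3}\}\to\operatorname{span}_{\mathbb{R}}\{1,\mathbf{j_1},\mathbf{j_2},\mathbf{j_3}\}$, $\varphi_3(x_1+x_2\mathbf{j_1}+x_3\mathbf{j_2}-x_4\mathbf{j_3})=-x_4+x_1\mathbf{j_1}+x_2\mathbf{j_2}+x_3\mathbf{j_3}$. For all real $c_1,c_2,c_3$, with $c=c_1+c_2\mathbf{j_1}+c_3\mathbf{j_2}$ and $c'=\varphi_3(c)=c_1\mathbf{j_1}+c_2\mathbf{j_2}+c_3\mathbf{j_3}$, we have $\varphi_3\circ Q_{3,c}\circ\varphi_3^{-1}=Q_{3,c'}$. Consequently $\mathcal{T}^3(\mathbf{i_1},\mathbf{i_2},\mathbf{j_2})=\varphi_1(\mathcal{T}^3(1,\mathbf{i_1},\mathbf{i_2}))$, $\mathcal{T}^3(\mathbf{i_1},\mathbf{j_1},\mathbf{j_2})=\varphi_2(\mathcal{T}^3(1,\mathbf{i_1},\mathbf{j_1}))$ and $\mathcal{T}^3(\mathbf{j_1},\mathbf{j_2},\mathbf{j_3})=\varphi_3(\mathcal{T}^3(1,\mathbf{j_1},\mathbf{j_2}))$; i.e. these pairs of slices have the same dynamics.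
   Context: The tricomplex numbers $\mathbb{M}(3)$ form the commutative real algebra generated by commuting units $\mathbf{i_1},\mathbf{i_2},\mathbf{i_3}$ with $\mathbf{i_k}^2=-1$; set $\mathbf{j_1}=\mathbf{i_1}\mathbf{i_2}$, $\mathbf{j_2}=\mathbf{i_1}\mathbf{i_3}$, $\mathbf{j_3}=\mathbf{i_2}\mathbf{i_3}$, $\mathbf{i_4}=\mathbf{i_1}\mathbf{i_2}\mathbf{i_3}$, with real basis $1,\mathbf{i_1},\mathbf{i_2},\mathbf{i_3},\mathbf{i_4},\mathbf{j_1},\mathbf{j_2},\mathbf{j_3}$ and Euclidean norm on coordinates. For $c\in\mathbb{M}(3)$, $Q_{3,c}(\eta)=\eta^3+c$ and $Q_{3,c}^m$ is its $m$-fold iterate. For three distinct units $u,v,w$ among $1,\mathbf{i_1},\dots,\mathbf{i_4},\mathbf{j_1},\mathbf{j_2},\mathbf{j_3}$, the 3D slice is $\mathcal{T}^3(u,v,w)=\{c\in\operatorname{span}_{\mathbb{R}}\{u,v,w\} : (Q_{3,c}^m(0))_{m\geq1}\text{ is bounded}\}$. *)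

theory Defs
  imports Complex_Main
begin

text \<open>Tricomplex numbers M(3): real coordinates indexed by the monomials
  i1^a i2^b i3^c with a,b,c in {0,1}, encoded as (a,b,c) :: bool*bool*bool.
  Since the units commute and square to -1, the product of monomials is
  i_S * i_T = (-1)^|S inter T| * i_(S xor T).\<close>

type_synonym tc = "bool \<times> bool \<times> bool \<Rightarrow> real"

definition tc_xor :: "bool \<times> bool \<times> bool \<Rightarrow> bool \<times> bool \<times> bool \<Rightarrow> bool \<times> bool \<times> bool" where
  "tc_xor s t = (case (s, t) of ((a1,a2,a3),(b1,b2,b3)) \<Rightarrow> (a1 \<noteq> b1, a2 \<noteq> b2, a3 \<noteq> b3))"

definition tc_sign :: "bool \<times> bool \<times> bool \<Rightarrow> bool \<times> bool \<times> bool \<Rightarrow> real" where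
  "tc_sign s t = (case (s, t) of ((a1,a2,a3),(b1,b2,b3)) \<Rightarrow>
     (-1) ^ ((if a1 \<and> b1 then 1 else 0) + (if a2 \<and> b2 then 1 else 0) + (if a3 \<and> b3 then (1::nat) else 0)))"

definition tc_mul :: "tc \<Rightarrow> tc \<Rightarrow> tc" where
  "tc_mul x y = (\<lambda>k. \<Sum>s\<in>UNIV. \<Sum>t\<in>UNIV. if tc_xor s t = k then tc_sign s t * x s * y t else 0)"

definition tc_add :: "tc \<Rightarrow> tc \<Rightarrow> tc" where
  "tc_add x y = (\<lambda>k. x k + y k)"

definition tc_scale :: "real \<Rightarrow> tc \<Rightarrow> tc" where
  "tc_scale r x = (\<lambda>k. r * x k)"

definition tc_zero :: tc where
  "tc_zero = (\<lambda>k. 0)"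

definition tc_norm :: "tc \<Rightarrow> real" where
  "tc_norm x = sqrt (\<Sum>k\<in>UNIV. (x k)^2)"

definition basis :: "bool \<times> bool \<times> bool \<Rightarrow> tc" where
  "basis k = (\<lambda>j. if j = k then 1 else 0)"

definition "ix_1  = (False, False, False)"
definition "ix_i1 = (True, False, False)"
definition "ix_i2 = (False, True, False)"
definition "ix_i3 = (False, False, True)"
definition "ix_j1 = (True, True, False)"   \<comment> \<open>j1 = i1 i2\<close>
definition "ix_j2 = (True, False, True)"   \<comment> \<open>j2 = i1 i3\<close>
definition "ix_j3 = (False, True, True)"   \<comment> \<open>j3 = i2 i3\<close>
definition "ix_i4 = (True, True, True)"    \<comment> \<open>i4 = i1 i2 i3\<close>

definition "e_1  = basis ix_1"
definition "e_i1 = basis ix_i1"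
definition "e_i2 = basis ix_i2"
definition "e_i3 = basis ix_i3"
definition "e_j1 = basis ix_j1"
definition "e_j2 = basis ix_j2"
definition "e_j3 = basis ix_j3"
definition "e_i4 = basis ix_i4"

definition Q3 :: "tc \<Rightarrow> tc \<Rightarrow> tc" where
  "Q3 c \<eta> = tc_add (tc_mul \<eta> (tc_mul \<eta> \<eta>)) c"

definition span3 :: "tc \<Rightarrow> tc \<Rightarrow> tc \<Rightarrow> tc set" where
  "span3 u v w = {tc_add (tc_scale a u) (tc_add (tc_scale b v) (tc_scale d w)) | a b d. True}"

definition span4 :: "tc \<Rightarrow> tc \<Rightarrow> tc \<Rightarrow> tc \<Rightarrow> tc set" where
  "span4 u v w z = {tc_add (tc_scale a u) (tc_add (tc_scale b v) (tc_add (tc_scale d w) (tc_scale f z))) | a b d f. True}"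

definition bounded_orbit :: "tc \<Rightarrow> bool" where
  "bounded_orbit c \<longleftrightarrow> (\<exists>M. \<forall>m\<ge>1. tc_norm ((Q3 c ^^ m) tc_zero) \<le> M)"

definition T3 :: "tc \<Rightarrow> tc \<Rightarrow> tc \<Rightarrow> tc set" where
  "T3 u v w = {c \<in> span3 u v w. bounded_orbit c}"

definition phi1 :: "tc \<Rightarrow> tc" where
  "phi1 x = tc_add (tc_scale (x ix_i1) e_i1) (tc_add (tc_scale (x ix_i2) e_i2)
     (tc_add (tc_scale (x ix_1) e_j2) (tc_scale (- x ix_j1) e_j3)))"

text \<open>phi2(x1 + x2 i1 - x3 i2 + x4 j1) = x2 i1 + x4 j1 + x1 j2 - x3 i4,
  i.e. the i2-coefficient becomes the i4-coefficient.\<close>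
definition phi2 :: "tc \<Rightarrow> tc" where
  "phi2 x = tc_add (tc_scale (x ix_i1) e_i1) (tc_add (tc_scale (x ix_j1) e_j1)
     (tc_add (tc_scale (x ix_1) e_j2) (tc_scale (x ix_i2) e_i4)))"

text \<open>phi3(x1 + x2 j1 + x3 j2 - x4 j3) = -x4 + x1 j1 + x2 j2 + x3 j3,
  i.e. the j3-coefficient becomes the real part.\<close>
definition phi3 :: "tc \<Rightarrow> tc" where
  "phi3 x = tc_add (tc_scale (x ix_j3) e_1) (tc_add (tc_scale (x ix_1) e_j1)
     (tc_add (tc_scale (x ix_j1) e_j2) (tc_scale (x ix_j2) e_j3)))"

end

theory Submission
  imports Defs
begin

text \<open>Each \<open>\<phi>\<close> is a signed relabelling of coordinates which restricts to an isometric linear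
  bijection between two four-dimensional subspaces, the first one closed under multiplication,
  and which commutes with cubing there. Hence \<open>\<phi> \<circ> Q3 c = Q3 (\<phi> c) \<circ> \<phi>\<close> on that subspace; as
  \<open>\<phi> 0 = 0\<close>, the critical orbit of \<open>c\<close> is carried onto that of \<open>\<phi> c\<close> with equal norms, so
  boundedness is preserved, and it remains to see that \<open>\<phi>\<close> maps one slice onto the other.\<close>

lemma UNIV_index: "(UNIV :: (bool \<times> bool \<times> bool) set) = {ix_1, ix_i1, ix_i2, ix_i3, ix_j1, ix_j2, ix_j3, ix_i4}"
  by (auto simp: ix_1_def ix_i1_def ix_i2_def ix_i3_def ix_j1_def ix_j2_def ix_j3_def ix_i4_def)

lemma index_distinct: "distinct [ix_1, ix_i1, ix_i2, ix_i3, ix_j1, ix_j2, ix_j3, ix_i4]"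
  by (simp add: ix_1_def ix_i1_def ix_i2_def ix_i3_def ix_j1_def ix_j2_def ix_j3_def ix_i4_def)

lemmas index_neq [simp] =
  index_distinct [simplified] index_distinct [THEN distinct_rev [THEN iffD2], simplified]

lemma sum_UNIV_index:
  fixes f :: "bool \<times> bool \<times> bool \<Rightarrow> 'a :: comm_monoid_add"
  shows "(\<Sum>k\<in>UNIV. f k) = f ix_1 + f ix_i1 + f ix_i2 + f ix_i3 + f ix_j1 + f ix_j2 + f ix_j3 + f ix_i4"
  by (simp add: UNIV_index add.assoc)

lemma all_index: "(\<forall>k. P k) \<longleftrightarrow> P ix_1 \<and> P ix_i1 \<and> P ix_i2 \<and> P ix_i3 \<and> P ix_j1 \<and> P ix_j2 \<and> P ix_j3 \<and> P ix_i4"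
  by (metis UNIV_I UNIV_index empty_iff insert_iff)

lemma tc_eq_iff: "x = y \<longleftrightarrow> x ix_1 = y ix_1 \<and> x ix_i1 = y ix_i1 \<and> x ix_i2 = y ix_i2 \<and> x ix_i3 = y ix_i3
    \<and> x ix_j1 = y ix_j1 \<and> x ix_j2 = y ix_j2 \<and> x ix_j3 = y ix_j3 \<and> x ix_i4 = y ix_i4"
  for x y :: tc
  unfolding fun_eq_iff by (rule all_index)

lemma tc_mul_apply:
  "tc_mul x y ix_1 = x ix_1 * y ix_1 - x ix_i1 * y ix_i1 - x ix_i2 * y ix_i2 - x ix_i3 * y ix_i3 + x ix_j1 * y ix_j1 + x ix_j2 * y ix_j2 + x ix_j3 * y ix_j3 - x ix_i4 * y ix_i4"
  "tc_mul x y ix_i1 = x ix_1 * y ix_i1 + x ix_i1 * y ix_1 - x ix_i2 * y ix_j1 - x ix_i3 * y ix_j2 - x ix_j1 * y ix_i2 - x ix_j2 * y ix_i3 + x ix_j3 * y ix_i4 + x ix_i4 * y ix_j3"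
  "tc_mul x y ix_i2 = x ix_1 * y ix_i2 - x ix_i1 * y ix_j1 + x ix_i2 * y ix_1 - x ix_i3 * y ix_j3 - x ix_j1 * y ix_i1 + x ix_j2 * y ix_i4 - x ix_j3 * y ix_i3 + x ix_i4 * y ix_j2"
  "tc_mul x y ix_i3 = x ix_1 * y ix_i3 - x ix_i1 * y ix_j2 - x ix_i2 * y ix_j3 + x ix_i3 * y ix_1 + x ix_j1 * y ix_i4 - x ix_j2 * y ix_i1 - x ix_j3 * y ix_i2 + x ix_i4 * y ix_j1"
  "tc_mul x y ix_j1 = x ix_1 * y ix_j1 + x ix_i1 * y ix_i2 + x ix_i2 * y ix_i1 - x ix_i3 * y ix_i4 + x ix_j1 * y ix_1 - x ix_j2 * y ix_j3 - x ix_j3 * y ix_j2 - x ix_i4 * y ix_i3"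
  "tc_mul x y ix_j2 = x ix_1 * y ix_j2 + x ix_i1 * y ix_i3 - x ix_i2 * y ix_i4 + x ix_i3 * y ix_i1 - x ix_j1 * y ix_j3 + x ix_j2 * y ix_1 - x ix_j3 * y ix_j1 - x ix_i4 * y ix_i2"
  "tc_mul x y ix_j3 = x ix_1 * y ix_j3 - x ix_i1 * y ix_i4 + x ix_i2 * y ix_i3 + x ix_i3 * y ix_i2 - x ix_j1 * y ix_j2 - x ix_j2 * y ix_j1 + x ix_j3 * y ix_1 - x ix_i4 * y ix_i1"
  "tc_mul x y ix_i4 = x ix_1 * y ix_i4 + x ix_i1 * y ix_j3 + x ix_i2 * y ix_j2 + x ix_i3 * y ix_j1 + x ix_j1 * y ix_i3 + x ix_j2 * y ix_i2 + x ix_j3 * y ix_i1 + x ix_i4 * y ix_1"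
  by (simp_all add: tc_mul_def sum_UNIV_index tc_xor_def tc_sign_def
      ix_1_def ix_i1_def ix_i2_def ix_i3_def ix_j1_def ix_j2_def ix_j3_def ix_i4_def)

lemma mem_span3_basis_iff:
  assumes "distinct [p, q, r]"
  shows "x \<in> span3 (basis p) (basis q) (basis r) \<longleftrightarrow> (\<forall>k. k \<notin> {p, q, r} \<longrightarrow> x k = 0)"
proof
  assume "x \<in> span3 (basis p) (basis q) (basis r)"
  then show "\<forall>k. k \<notin> {p, q, r} \<longrightarrow> x k = 0"
    by (auto simp: span3_def tc_add_def tc_scale_def basis_def)
next
  assume "\<forall>k. k \<notin> {p, q, r} \<longrightarrow> x k = 0"
  then have "x = tc_add (tc_scale (x p) (basis p)) (tc_add (tc_scale (x q) (basis q)) (tc_scale (x r) (basis r)))"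
    using assms by (auto simp: tc_add_def tc_scale_def basis_def)
  then show "x \<in> span3 (basis p) (basis q) (basis r)"
    unfolding span3_def by blast
qed

lemma mem_span4_basis_iff:
  assumes "distinct [p, q, r, s]"
  shows "x \<in> span4 (basis p) (basis q) (basis r) (basis s) \<longleftrightarrow> (\<forall>k. k \<notin> {p, q, r, s} \<longrightarrow> x k = 0)"
proof
  assume "x \<in> span4 (basis p) (basis q) (basis r) (basis s)"
  then show "\<forall>k. k \<notin> {p, q, r, s} \<longrightarrow> x k = 0"
    by (auto simp: span4_def tc_add_def tc_scale_def basis_def)
next
  assume "\<forall>k. k \<notin> {p, q, r, s} \<longrightarrow> x k = 0"
  then have "x = tc_add (tc_scale (x p) (basis p)) (tc_add (tc_scale (x q) (basis q))
      (tc_add (tc_scale (x r) (basis r)) (tc_scale (x s) (basis s))))"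
    using assms by (auto simp: tc_add_def tc_scale_def basis_def)
  then show "x \<in> span4 (basis p) (basis q) (basis r) (basis s)"
    unfolding span4_def by blast
qed

lemma span3_memI: "tc_add (tc_scale a u) (tc_add (tc_scale b v) (tc_scale d w)) \<in> span3 u v w"
  unfolding span3_def by blast

lemmas basis_defs = e_1_def e_i1_def e_i2_def e_i3_def e_j1_def e_j2_def e_j3_def e_i4_def

lemma mem_slices_iff:
  "x \<in> span3 e_1 e_i1 e_i2 \<longleftrightarrow> x ix_i3 = 0 \<and> x ix_j1 = 0 \<and> x ix_j2 = 0 \<and> x ix_j3 = 0 \<and> x ix_i4 = 0"
  "x \<in> span3 e_i1 e_i2 e_j2 \<longleftrightarrow> x ix_1 = 0 \<and> x ix_i3 = 0 \<and> x ix_j1 = 0 \<and> x ix_j3 = 0 \<and> x ix_i4 = 0"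
  "x \<in> span3 e_1 e_i1 e_j1 \<longleftrightarrow> x ix_i2 = 0 \<and> x ix_i3 = 0 \<and> x ix_j2 = 0 \<and> x ix_j3 = 0 \<and> x ix_i4 = 0"
  "x \<in> span3 e_i1 e_j1 e_j2 \<longleftrightarrow> x ix_1 = 0 \<and> x ix_i2 = 0 \<and> x ix_i3 = 0 \<and> x ix_j3 = 0 \<and> x ix_i4 = 0"
  "x \<in> span3 e_1 e_j1 e_j2 \<longleftrightarrow> x ix_i1 = 0 \<and> x ix_i2 = 0 \<and> x ix_i3 = 0 \<and> x ix_j3 = 0 \<and> x ix_i4 = 0"
  "x \<in> span3 e_j1 e_j2 e_j3 \<longleftrightarrow> x ix_1 = 0 \<and> x ix_i1 = 0 \<and> x ix_i2 = 0 \<and> x ix_i3 = 0 \<and> x ix_i4 = 0"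
  by (simp_all add: basis_defs mem_span3_basis_iff all_index del: split_paired_All)

lemma mem_spaces_iff:
  "x \<in> span4 e_1 e_i1 e_i2 e_j1 \<longleftrightarrow> x ix_i3 = 0 \<and> x ix_j2 = 0 \<and> x ix_j3 = 0 \<and> x ix_i4 = 0"
  "x \<in> span4 e_i1 e_i2 e_j2 e_j3 \<longleftrightarrow> x ix_1 = 0 \<and> x ix_i3 = 0 \<and> x ix_j1 = 0 \<and> x ix_i4 = 0"
  "x \<in> span4 e_i1 e_j1 e_j2 e_i4 \<longleftrightarrow> x ix_1 = 0 \<and> x ix_i2 = 0 \<and> x ix_i3 = 0 \<and> x ix_j3 = 0"
  "x \<in> span4 e_1 e_j1 e_j2 e_j3 \<longleftrightarrow> x ix_i1 = 0 \<and> x ix_i2 = 0 \<and> x ix_i3 = 0 \<and> x ix_i4 = 0"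
  by (simp_all add: basis_defs mem_span4_basis_iff all_index del: split_paired_All)

lemma span3_subset_span4:
  "span3 e_1 e_i1 e_i2 \<subseteq> span4 e_1 e_i1 e_i2 e_j1"
  "span3 e_1 e_i1 e_j1 \<subseteq> span4 e_1 e_i1 e_i2 e_j1"
  "span3 e_1 e_j1 e_j2 \<subseteq> span4 e_1 e_j1 e_j2 e_j3"
  by (auto simp: mem_slices_iff mem_spaces_iff)

locale Q3_conjugacy =
  fixes \<phi> \<psi> :: "tc \<Rightarrow> tc" and D E :: "tc set"
  assumes psi_phi: "x \<in> D \<Longrightarrow> \<psi> (\<phi> x) = x"
    and phi_psi: "y \<in> E \<Longrightarrow> \<phi> (\<psi> y) = y"
    and phi_in: "x \<in> D \<Longrightarrow> \<phi> x \<in> E"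
    and psi_in: "y \<in> E \<Longrightarrow> \<psi> y \<in> D"
    and Q3_in: "c \<in> D \<Longrightarrow> x \<in> D \<Longrightarrow> Q3 c x \<in> D"
    and phi_Q3: "c \<in> D \<Longrightarrow> x \<in> D \<Longrightarrow> \<phi> (Q3 c x) = Q3 (\<phi> c) (\<phi> x)"
    and zero_in: "tc_zero \<in> D"
    and phi_zero: "\<phi> tc_zero = tc_zero"
    and norm_phi: "x \<in> D \<Longrightarrow> tc_norm (\<phi> x) = tc_norm x"
begin

lemma bij: "bij_betw \<phi> D E"
  by (rule bij_betw_byWitness [where f' = \<psi>]) (auto simp: psi_phi phi_psi phi_in psi_in)

lemma the_inv_into_eq: "y \<in> E \<Longrightarrow> the_inv_into D \<phi> y = \<psi> y"
  using bij by (simp add: bij_betw_def the_inv_into_f_eq phi_psi psi_in)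

lemma conjugate_Q3: "c \<in> D \<Longrightarrow> \<eta> \<in> E \<Longrightarrow> \<phi> (Q3 c (the_inv_into D \<phi> \<eta>)) = Q3 (\<phi> c) \<eta>"
  by (simp add: the_inv_into_eq phi_Q3 psi_in phi_psi)

lemma orbit_in_and_phi_orbit:
  assumes "c \<in> D"
  shows "(Q3 c ^^ m) tc_zero \<in> D \<and> \<phi> ((Q3 c ^^ m) tc_zero) = (Q3 (\<phi> c) ^^ m) tc_zero"
proof (induction m)
  case 0
  show ?case by (simp add: zero_in phi_zero)
next
  case (Suc m)
  then show ?case by (simp add: assms Q3_in phi_Q3)
qed

lemma bounded_orbit_phi_iff: "c \<in> D \<Longrightarrow> bounded_orbit (\<phi> c) \<longleftrightarrow> bounded_orbit c"
  unfolding bounded_orbit_def by (metis orbit_in_and_phi_orbit norm_phi)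

lemma image_eq_if_inverse_maps:
  assumes "\<And>y. y \<in> S' \<Longrightarrow> y \<in> E" "\<And>x. x \<in> S \<Longrightarrow> \<phi> x \<in> S'" "\<And>y. y \<in> S' \<Longrightarrow> \<psi> y \<in> S"
  shows "\<phi> ` S = S'"
proof
  show "\<phi> ` S \<subseteq> S'" using assms(2) by blast
  show "S' \<subseteq> \<phi> ` S"
  proof
    fix y assume "y \<in> S'"
    then have "y = \<phi> (\<psi> y)" "\<psi> y \<in> S" using assms(1,3) phi_psi by simp_all
    then show "y \<in> \<phi> ` S" by blast
  qed
qed

lemma T3_eq_image:
  assumes "span3 u v w \<subseteq> D" "\<phi> ` span3 u v w = span3 u' v' w'"
  shows "T3 u' v' w' = \<phi> ` T3 u v w"
  unfolding T3_def assms(2) [symmetric] using assms(1) bounded_orbit_phi_iff by blast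

end

lemmas tc_coordinate_simps = tc_eq_iff tc_add_def tc_scale_def tc_zero_def tc_norm_def sum_UNIV_index
  basis_def basis_defs Q3_def tc_mul_apply

definition psi1 :: "tc \<Rightarrow> tc" where
  "psi1 y = tc_add (tc_scale (y ix_j2) e_1) (tc_add (tc_scale (y ix_i1) e_i1)
     (tc_add (tc_scale (y ix_i2) e_i2) (tc_scale (- y ix_j3) e_j1)))"

interpretation phi1: Q3_conjugacy phi1 psi1 "span4 e_1 e_i1 e_i2 e_j1" "span4 e_i1 e_i2 e_j2 e_j3"
  by unfold_locales
    (unfold mem_spaces_iff, simp_all add: phi1_def psi1_def tc_coordinate_simps algebra_simps)

lemma phi1_T3: "T3 e_i1 e_i2 e_j2 = phi1 ` T3 e_1 e_i1 e_i2"
  by (rule phi1.T3_eq_image [OF span3_subset_span4(1) phi1.image_eq_if_inverse_maps])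
    (unfold mem_slices_iff mem_spaces_iff, simp_all add: phi1_def psi1_def tc_coordinate_simps)

lemma phi1_apply_slice:
  "phi1 (tc_add (tc_scale c1 e_1) (tc_add (tc_scale c2 e_i1) (tc_scale c3 e_i2)))
    = tc_add (tc_scale c2 e_i1) (tc_add (tc_scale c3 e_i2) (tc_scale c1 e_j2))"
  by (simp add: phi1_def tc_coordinate_simps)

definition psi2 :: "tc \<Rightarrow> tc" where
  "psi2 y = tc_add (tc_scale (y ix_j2) e_1) (tc_add (tc_scale (y ix_i1) e_i1)
     (tc_add (tc_scale (y ix_i4) e_i2) (tc_scale (y ix_j1) e_j1)))"

interpretation phi2: Q3_conjugacy phi2 psi2 "span4 e_1 e_i1 e_i2 e_j1" "span4 e_i1 e_j1 e_j2 e_i4"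
  by unfold_locales
    (unfold mem_spaces_iff, simp_all add: phi2_def psi2_def tc_coordinate_simps algebra_simps)

lemma phi2_T3: "T3 e_i1 e_j1 e_j2 = phi2 ` T3 e_1 e_i1 e_j1"
  by (rule phi2.T3_eq_image [OF span3_subset_span4(2) phi2.image_eq_if_inverse_maps])
    (unfold mem_slices_iff mem_spaces_iff, simp_all add: phi2_def psi2_def tc_coordinate_simps)

lemma phi2_apply_slice:
  "phi2 (tc_add (tc_scale c1 e_1) (tc_add (tc_scale c2 e_i1) (tc_scale c3 e_j1)))
    = tc_add (tc_scale c2 e_i1) (tc_add (tc_scale c3 e_j1) (tc_scale c1 e_j2))"
  by (simp add: phi2_def tc_coordinate_simps)

definition psi3 :: "tc \<Rightarrow> tc" where
  "psi3 y = tc_add (tc_scale (y ix_j1) e_1) (tc_add (tc_scale (y ix_j2) e_j1)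
     (tc_add (tc_scale (y ix_j3) e_j2) (tc_scale (y ix_1) e_j3)))"

interpretation phi3: Q3_conjugacy phi3 psi3 "span4 e_1 e_j1 e_j2 e_j3" "span4 e_1 e_j1 e_j2 e_j3"
  by unfold_locales
    (unfold mem_spaces_iff, simp_all add: phi3_def psi3_def tc_coordinate_simps algebra_simps)

lemma phi3_T3: "T3 e_j1 e_j2 e_j3 = phi3 ` T3 e_1 e_j1 e_j2"
  by (rule phi3.T3_eq_image [OF span3_subset_span4(3) phi3.image_eq_if_inverse_maps])
    (unfold mem_slices_iff mem_spaces_iff, simp_all add: phi3_def psi3_def tc_coordinate_simps)

lemma phi3_apply_slice:
  "phi3 (tc_add (tc_scale c1 e_1) (tc_add (tc_scale c2 e_j1) (tc_scale c3 e_j2)))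
    = tc_add (tc_scale c1 e_j1) (tc_add (tc_scale c2 e_j2) (tc_scale c3 e_j3))"
  by (simp add: phi3_def tc_coordinate_simps)

theorem mainTheorem16:
  shows
  "bij_betw phi1 (span4 e_1 e_i1 e_i2 e_j1) (span4 e_i1 e_i2 e_j2 e_j3)
   \<and> (\<forall>c1 c2 c3 :: real.
        let c = tc_add (tc_scale c1 e_1) (tc_add (tc_scale c2 e_i1) (tc_scale c3 e_i2));
            c' = phi1 c
        in c' = tc_add (tc_scale c2 e_i1) (tc_add (tc_scale c3 e_i2) (tc_scale c1 e_j2))
           \<and> (\<forall>\<eta>\<in>span4 e_i1 e_i2 e_j2 e_j3.
                phi1 (Q3 c (the_inv_into (span4 e_1 e_i1 e_i2 e_j1) phi1 \<eta>)) = Q3 c' \<eta>))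
   \<and> bij_betw phi2 (span4 e_1 e_i1 e_i2 e_j1) (span4 e_i1 e_j1 e_j2 e_i4)
   \<and> (\<forall>c1 c2 c3 :: real.
        let c = tc_add (tc_scale c1 e_1) (tc_add (tc_scale c2 e_i1) (tc_scale c3 e_j1));
            c' = phi2 c
        in c' = tc_add (tc_scale c2 e_i1) (tc_add (tc_scale c3 e_j1) (tc_scale c1 e_j2))
           \<and> (\<forall>\<eta>\<in>span4 e_i1 e_j1 e_j2 e_i4.
                phi2 (Q3 c (the_inv_into (span4 e_1 e_i1 e_i2 e_j1) phi2 \<eta>)) = Q3 c' \<eta>))
   \<and> bij_betw phi3 (span4 e_1 e_j1 e_j2 e_j3) (span4 e_1 e_j1 e_j2 e_j3)
   \<and> (\<forall>c1 c2 c3 :: real.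
        let c = tc_add (tc_scale c1 e_1) (tc_add (tc_scale c2 e_j1) (tc_scale c3 e_j2));
            c' = phi3 c
        in c' = tc_add (tc_scale c1 e_j1) (tc_add (tc_scale c2 e_j2) (tc_scale c3 e_j3))
           \<and> (\<forall>\<eta>\<in>span4 e_1 e_j1 e_j2 e_j3.
                phi3 (Q3 c (the_inv_into (span4 e_1 e_j1 e_j2 e_j3) phi3 \<eta>)) = Q3 c' \<eta>))
   \<and> T3 e_i1 e_i2 e_j2 = phi1 ` T3 e_1 e_i1 e_i2
   \<and> T3 e_i1 e_j1 e_j2 = phi2 ` T3 e_1 e_i1 e_j1
   \<and> T3 e_j1 e_j2 e_j3 = phi3 ` T3 e_1 e_j1 e_j2"
  unfolding Let_def
  by (intro conjI allI ballI phi1.bij phi2.bij phi3.bij phi1_T3 phi2_T3 phi3_T3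
      phi1_apply_slice phi2_apply_slice phi3_apply_slice
      phi1.conjugate_Q3 phi2.conjugate_Q3 phi3.conjugate_Q3;
    blast intro: span3_subset_span4 [THEN subsetD] span3_memI)

end
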